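(* Let $(L,T,U,\bar e)$ be a feasible basis structure of an instance of the budget-constrained minimum cost flow problem and let $x$ be its basic feasible flow (the basic solution with respect to the budget $B$). Then $x$ can be decomposed as $x = x^I + x^C$, where $x^I\in\mathbb{Z}^E$ is integral and $x^C$ is non-zero (and possibly fractional) only on the edges of the cycle $C(\bar e)$.
   Context: Budget-constrained minimum cost flow problem: given a directed multigraph $G=(V,E)$ with capacities $u_e\in\mathbb{N}_{\ge 0}$, costs $c_e\in\mathbb{Z}$, usage fees $b_e\in\mathbb{N}_{\ge 0}$ for $e\in E$, and a budget $B\in\mathbb{N}_{\ge0}$. A feasible flow is a vector $x\in\mathbb{R}^E$ with $\sum_{e\in\delta^-(v)}x_e=\sum_{e\in\delta^+(v)}x_e$ for all $v\in V$ ($\delta^+(v)$, $\delta^-(v)$ the outgoing/incoming edges) and $0\le x_e\le u_e$; write $c(x)=\sum_e c_ex_e$, $b(x)=\sum_e b_ex_e$. The goal is to minimize $c(x)$ over feasible flows with $b(x)\le B$. A basis structure is a tuple $(L,T,U,\bar e)$ with $\bar e\in E$, $L,T,U$ a partition of $E\setminus\{\bar e\}$, and $T$ a spanning tree of the underlying undirected graph of $G$. For $f\in E\setminus T$, $C(f)$ is the unique (undirected) cycle in $T\cup\{f\}$; $C^+(f)$ ($C^-(f)$) are its edges oriented in the same (opposite) direction as $f$ along the cycle, and $b(C(f))=\sum_{g\in C^+(f)}b_g-\sum_{g\in C^-(f)}b_g$. It is required that $b(C(\bar e))\neq 0$. The basic solution of $(L,T,U,\bar e)$ is the unique vector $x$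 satisfying flow conservation at every node, $x_e=0$ for $e\in L$, $x_e=u_e$ for $e\in U$, and $b(x)=B$. The basis structure is feasible if this $x$ satisfies $0\le x\le u$; $x$ is then called its basic feasible flow. *)

theory Defs
  imports Complex_Main
begin

definition wf_digraph :: "'v set \<Rightarrow> 'e set \<Rightarrow> ('e \<Rightarrow> 'v) \<Rightarrow> ('e \<Rightarrow> 'v) \<Rightarrow> bool" where
  "wf_digraph V E tail head \<longleftrightarrow> finite V \<and> finite E \<and> (\<forall>e\<in>E. tail e \<in> V \<and> head e \<in> V)"

definition und_adj :: "'e set \<Rightarrow> ('e \<Rightarrow> 'v) \<Rightarrow> ('e \<Rightarrow> 'v) \<Rightarrow> ('v \<times> 'v) set" where
  "und_adj F tail head = {(tail e, head e) | e. e \<in> F} \<union> {(head e, tail e) | e. e \<in> F}"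

definition und_connected :: "'e set \<Rightarrow> ('e \<Rightarrow> 'v) \<Rightarrow> ('e \<Rightarrow> 'v) \<Rightarrow> 'v \<Rightarrow> 'v \<Rightarrow> bool" where
  "und_connected F tail head v w \<longleftrightarrow> (v, w) \<in> (und_adj F tail head)\<^sup>*"

text \<open>T is a spanning tree of the underlying undirected (multi)graph of (V,E):
  T is a set of edges, any two vertices are connected using T, and T is
  acyclic, i.e. every edge of T is a bridge of T (its endpoints are disconnected
  after removing it; in particular T contains no loops and no parallel edges).\<close>
definition spanning_tree :: "'v set \<Rightarrow> 'e set \<Rightarrow> ('e \<Rightarrow> 'v) \<Rightarrow> ('e \<Rightarrow> 'v) \<Rightarrow> 'e set \<Rightarrow> bool" where
  "spanning_tree V E tail head T \<longleftrightarrow>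
     T \<subseteq> E \<and>
     (\<forall>v\<in>V. \<forall>w\<in>V. und_connected T tail head v w) \<and>
     (\<forall>e\<in>T. \<not> und_connected (T - {e}) tail head (tail e) (head e))"

definition conserves :: "'v set \<Rightarrow> 'e set \<Rightarrow> ('e \<Rightarrow> 'v) \<Rightarrow> ('e \<Rightarrow> 'v) \<Rightarrow> ('e \<Rightarrow> 'a::comm_monoid_add) \<Rightarrow> bool" where
  "conserves V E tail head x \<longleftrightarrow>
     (\<forall>v\<in>V. (\<Sum>e\<in>{e\<in>E. head e = v}. x e) = (\<Sum>e\<in>{e\<in>E. tail e = v}. x e))"

text \<open>The fundamental cycle C(f) of f w.r.t. the tree T, encoded as its signed
  incidence vector: +1 on the edges of C^+(f) (oriented like f along the cycle,
  including f itself), -1 on the edges of C^-(f), 0 elsewhere.\<close>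
definition fund_cycle :: "'v set \<Rightarrow> 'e set \<Rightarrow> ('e \<Rightarrow> 'v) \<Rightarrow> ('e \<Rightarrow> 'v) \<Rightarrow> 'e set \<Rightarrow> 'e \<Rightarrow> ('e \<Rightarrow> int)" where
  "fund_cycle V E tail head T f = (THE \<gamma>.
     \<gamma> f = 1 \<and> (\<forall>e. \<gamma> e \<in> {-1, 0, 1}) \<and> (\<forall>e. \<gamma> e \<noteq> 0 \<longrightarrow> e \<in> insert f T) \<and>
     conserves V E tail head \<gamma>)"

definition cycle_edges :: "'v set \<Rightarrow> 'e set \<Rightarrow> ('e \<Rightarrow> 'v) \<Rightarrow> ('e \<Rightarrow> 'v) \<Rightarrow> 'e set \<Rightarrow> 'e \<Rightarrow> 'e set" where
  "cycle_edges V E tail head T f = {e. fund_cycle V E tail head T f e \<noteq> 0}"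

definition cycle_fee :: "'v set \<Rightarrow> 'e set \<Rightarrow> ('e \<Rightarrow> 'v) \<Rightarrow> ('e \<Rightarrow> 'v) \<Rightarrow> 'e set \<Rightarrow> ('e \<Rightarrow> nat) \<Rightarrow> 'e \<Rightarrow> int" where
  "cycle_fee V E tail head T b f = (\<Sum>e\<in>E. int (b e) * fund_cycle V E tail head T f e)"

definition basis_structure ::
  "'v set \<Rightarrow> 'e set \<Rightarrow> ('e \<Rightarrow> 'v) \<Rightarrow> ('e \<Rightarrow> 'v) \<Rightarrow> ('e \<Rightarrow> nat) \<Rightarrow>
   'e set \<Rightarrow> 'e set \<Rightarrow> 'e set \<Rightarrow> 'e \<Rightarrow> bool" where
  "basis_structure V E tail head b L T U eb \<longleftrightarrow>
     eb \<in> E \<and> L \<union> T \<union> U = E - {eb} \<and> L \<inter> T = {} \<and> L \<inter> U = {} \<and> T \<inter> U = {} \<and>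
     spanning_tree V E tail head T \<and> cycle_fee V E tail head T b eb \<noteq> 0"

definition basic_solution ::
  "'v set \<Rightarrow> 'e set \<Rightarrow> ('e \<Rightarrow> 'v) \<Rightarrow> ('e \<Rightarrow> 'v) \<Rightarrow> ('e \<Rightarrow> nat) \<Rightarrow> ('e \<Rightarrow> nat) \<Rightarrow> nat \<Rightarrow>
   'e set \<Rightarrow> 'e set \<Rightarrow> 'e set \<Rightarrow> ('e \<Rightarrow> real) \<Rightarrow> bool" where
  "basic_solution V E tail head u b B L T U x \<longleftrightarrow>
     conserves V E tail head x \<and> (\<forall>e\<in>L. x e = 0) \<and> (\<forall>e\<in>U. x e = real (u e)) \<and>
     (\<Sum>e\<in>E. real (b e) * x e) = real B"

end

theory Submission
  imports Defs
begin

text \<open>Take x^C = x(ebar) times the fundamental cycle of ebar. Then x^I = x - x^C is a circulation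
  that vanishes on ebar and is integral on L and U. On a tree the flow is determined by the
  excesses: the value on a tree edge e is minus the total excess of the vertices on the tail side
  of e, since every other tree edge has both or no endpoints there. Hence a circulation that is
  integral off the tree is integral everywhere. The same cut formula shows that the fundamental
  cycle (a path flow in the tree closed up by the edge) is well defined with values in {-1,0,1}.\<close>

definition excess :: "'e set \<Rightarrow> ('e \<Rightarrow> 'v) \<Rightarrow> ('e \<Rightarrow> 'v) \<Rightarrow> ('e \<Rightarrow> 'a::ab_group_add) \<Rightarrow> 'v \<Rightarrow> 'a" where
  "excess F tail head y v = (\<Sum>e\<in>{e\<in>F. head e = v}. y e) - (\<Sum>e\<in>{e\<in>F. tail e = v}. y e)"

lemma excess_conv_sum:
  assumes "finite F"
  shows "excess F tail head y v =
    (\<Sum>e\<in>F. (if head e = v then y e else 0) - (if tail e = v then y e else 0))"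
  using assms by (simp add: excess_def sum_subtractf sum.inter_filter)

lemma sum_excess:
  assumes "finite F" "finite S"
  shows "(\<Sum>v\<in>S. excess F tail head y v) =
    (\<Sum>e\<in>F. (if head e \<in> S then y e else 0) - (if tail e \<in> S then y e else 0))"
proof -
  have "(\<Sum>v\<in>S. excess F tail head y v) =
      (\<Sum>e\<in>F. \<Sum>v\<in>S. (if head e = v then y e else 0) - (if tail e = v then y e else 0))"
    using assms by (simp add: excess_conv_sum sum.swap[of _ S])
  also have "\<dots> = (\<Sum>e\<in>F. (if head e \<in> S then y e else 0) - (if tail e \<in> S then y e else 0))"
    using assms by (simp add: sum_subtractf)
  finally show ?thesis .
qed

lemma excess_add: "excess F tail head (\<lambda>e. y e + z e) v = excess F tail head y v + excess F tail head z v"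
  by (simp add: excess_def sum.distrib)

lemma excess_diff: "excess F tail head (\<lambda>e. y e - z e) v = excess F tail head y v - excess F tail head z v"
  by (simp add: excess_def sum_subtractf)

lemma excess_cong: "(\<And>e. e \<in> F \<Longrightarrow> y e = z e) \<Longrightarrow> excess F tail head y v = excess F tail head z v"
  by (simp add: excess_def)

lemma excess_insert:
  assumes "finite F" "e \<notin> F"
  shows "excess (insert e F) tail head y v =
    excess F tail head y v + (if head e = v then y e else 0) - (if tail e = v then y e else 0)"
  using assms by (simp add: excess_conv_sum algebra_simps)

lemma excess_single_edge:
  assumes "finite F" "e \<in> F"
  shows "excess F tail head (\<lambda>g. if g = e then c else 0) v =
    (if head e = v then c else 0) - (if tail e = v then c else 0)"
  using assms by (simp add: excess_def)

lemma excess_restrict: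
  assumes "finite E" "F \<subseteq> E" "\<forall>e\<in>E - F. y e = 0"
  shows "excess E tail head y v = excess F tail head y v"
  unfolding excess_conv_sum[OF assms(1)] excess_conv_sum[OF finite_subset[OF assms(2,1)]]
  using assms by (intro sum.mono_neutral_right) auto

lemma excess_Diff:
  assumes "finite E" "F \<subseteq> E"
  shows "excess E tail head y v = excess F tail head y v + excess (E - F) tail head y v"
  using assms sum.subset_diff[OF assms(2,1)] by (simp add: excess_conv_sum finite_subset add.commute)

lemma conserves_iff_excess: "conserves V E tail head y \<longleftrightarrow> (\<forall>v\<in>V. excess E tail head y v = 0)"
  by (simp add: conserves_def excess_def)

lemma conserves_diff:
  fixes y z :: "'e \<Rightarrow> 'a::ab_group_add"
  shows "conserves V E tail head y \<Longrightarrow> conserves V E tail head z \<Longrightarrow> conserves V E tail head (\<lambda>e. y e - z e)"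
  by (simp add: conserves_iff_excess excess_diff)

lemma conserves_mult_left:
  fixes y :: "'e \<Rightarrow> 'a::ring"
  shows "conserves V E tail head y \<Longrightarrow> conserves V E tail head (\<lambda>e. c * y e)"
  unfolding conserves_def sum_distrib_left[symmetric] by simp

lemma conserves_of_int:
  "conserves V E tail head y \<Longrightarrow> conserves V E tail head (\<lambda>e. of_int (y e) :: 'a::ring_1)"
  unfolding conserves_def of_int_sum[symmetric] by simp

lemma und_connected_sym: "und_connected F tail head a b \<Longrightarrow> und_connected F tail head b a"
proof -
  have sym: "(und_adj F tail head)\<inverse> = und_adj F tail head" by (auto simp: und_adj_def)
  assume "und_connected F tail head a b"
  then have "(a, b) \<in> ((und_adj F tail head)\<inverse>)\<^sup>*" unfolding und_connected_def sym .
  then show ?thesis unfolding und_connected_def by (rule rtrancl_converseD)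
qed

lemma und_connected_trans:
  "und_connected F tail head a b \<Longrightarrow> und_connected F tail head b c \<Longrightarrow> und_connected F tail head a c"
  unfolding und_connected_def by (rule rtrancl_trans)

lemma und_connected_edge: "e \<in> F \<Longrightarrow> und_connected F tail head (tail e) (head e)"
  unfolding und_connected_def und_adj_def by blast

definition forest :: "'e set \<Rightarrow> ('e \<Rightarrow> 'v) \<Rightarrow> ('e \<Rightarrow> 'v) \<Rightarrow> bool" where
  "forest F tail head \<longleftrightarrow> (\<forall>e\<in>F. \<not> und_connected (F - {e}) tail head (tail e) (head e))"

lemma spanning_tree_imp_forest: "spanning_tree V E tail head T \<Longrightarrow> forest T tail head"
  by (simp add: spanning_tree_def forest_def)

lemma bridge_value_eq_cut_excess:
  assumes "finite V" "finite F" "\<forall>g\<in>F. tail g \<in> V \<and> head g \<in> V"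
    and "e \<in> F" "\<not> und_connected (F - {e}) tail head (tail e) (head e)"
  defines "S \<equiv> {w\<in>V. und_connected (F - {e}) tail head (tail e) w}"
  shows "y e = - (\<Sum>v\<in>S. excess F tail head y v)"
proof -
  have tail_in: "tail e \<in> S"
    using assms(3,4) by (simp add: S_def und_connected_def)
  have head_notin: "head e \<notin> S"
    using assms(5) by (simp add: S_def)
  have closed: "tail g \<in> S \<longleftrightarrow> head g \<in> S" if "g \<in> F - {e}" for g
  proof -
    have edge: "und_connected (F - {e}) tail head (tail g) (head g)"
      using that by (rule und_connected_edge)
    show ?thesis
      using und_connected_trans[OF _ edge] und_connected_trans[OF _ und_connected_sym[OF edge]]
        that assms(3) unfolding S_def by auto
  qed
  have "(\<Sum>v\<in>S. excess F tail head y v) =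
      (\<Sum>g\<in>F. (if head g \<in> S then y g else 0) - (if tail g \<in> S then y g else 0))"
    using assms(1,2) by (simp add: S_def sum_excess)
  also have "\<dots> = - y e + (\<Sum>g\<in>F - {e}. (if head g \<in> S then y g else 0) - (if tail g \<in> S then y g else 0))"
    using assms(2,4) tail_in head_notin by (simp add: sum.remove)
  also have "\<dots> = - y e" using closed by (simp add: sum.neutral)
  finally show ?thesis by simp
qed

lemma sum_mem_subgroup:
  fixes f :: "'b \<Rightarrow> 'a::ab_group_add"
  assumes "0 \<in> R" "\<And>a b. a \<in> R \<Longrightarrow> b \<in> R \<Longrightarrow> a - b \<in> R" "\<forall>i\<in>I. f i \<in> R"
  shows "sum f I \<in> R"
proof -
  have add: "a + b \<in> R" if "a \<in> R" "b \<in> R" for a b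
    using assms(2)[OF that(1) assms(2)[OF assms(1) that(2)]] by simp
  show ?thesis
    using assms(3) by (induction I rule: infinite_finite_induct) (auto simp: assms(1) add)
qed

lemma forest_circulation_in_subgroup:
  fixes y :: "'e \<Rightarrow> 'a::ab_group_add"
  assumes "wf_digraph V E tail head" "T \<subseteq> E" "forest T tail head" "conserves V E tail head y"
    and "0 \<in> R" "\<And>a b. a \<in> R \<Longrightarrow> b \<in> R \<Longrightarrow> a - b \<in> R"
    and "\<forall>e\<in>E - T. y e \<in> R"
  shows "\<forall>e\<in>E. y e \<in> R"
proof -
  have fin: "finite V" "finite E" "finite T" and ends: "\<forall>g\<in>T. tail g \<in> V \<and> head g \<in> V"
    using assms(1,2) finite_subset by (auto simp: wf_digraph_def)
  have minus: "- a \<in> R" if "a \<in> R" for a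
    using assms(6)[OF assms(5) that] by simp
  have "excess T tail head y v \<in> R" if "v \<in> V" for v
  proof -
    have "excess T tail head y v = - excess (E - T) tail head y v"
      using assms(4) that excess_Diff[OF fin(2) assms(2), of tail head y v]
      by (simp add: conserves_iff_excess eq_neg_iff_add_eq_0)
    moreover have "excess (E - T) tail head y v \<in> R"
      unfolding excess_def using assms(5-7) by (intro assms(6) sum_mem_subgroup) auto
    ultimately show ?thesis using minus by simp
  qed
  then have "y e \<in> R" if "e \<in> T" for e
  proof -
    have "(\<Sum>v\<in>{w\<in>V. und_connected (T - {e}) tail head (tail e) w}. excess T tail head y v) \<in> R"
      using \<open>\<And>v. v \<in> V \<Longrightarrow> excess T tail head y v \<in> R\<close> by (intro sum_mem_subgroup[OF assms(5,6)]) auto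
    then show ?thesis
      using bridge_value_eq_cut_excess[OF fin(1,3) ends that, where y = y] assms(3) that minus
      unfolding forest_def by auto
  qed
  then show ?thesis using assms(7) by blast
qed

lemma path_flow_exists:
  assumes "finite F" "und_connected F tail head s t"
  shows "\<exists>y :: 'e \<Rightarrow> int. (\<forall>e. e \<notin> F \<longrightarrow> y e = 0) \<and>
    (\<forall>v. excess F tail head y v = of_bool (v = t) - of_bool (v = s))"
  using assms(2) unfolding und_connected_def
proof (induction t rule: rtrancl_induct)
  case base
  show ?case by (intro exI[of _ "\<lambda>_. 0"]) (simp add: excess_def)
next
  case (step w t)
  then obtain y :: "'e \<Rightarrow> int" where y: "\<forall>e. e \<notin> F \<longrightarrow> y e = 0"
    "\<forall>v. excess F tail head y v = of_bool (v = w) - of_bool (v = s)"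
    by blast
  obtain e c where e: "e \<in> F"
    and c: "\<And>v. (if head e = v then c else 0) - (if tail e = v then c else 0) =
      of_bool (v = t) - (of_bool (v = w) :: int)"
  proof -
    from step.hyps(2) obtain e where "e \<in> F"
      and "tail e = w \<and> head e = t \<or> head e = w \<and> tail e = t"
      unfolding und_adj_def by blast
    then show thesis
      by (elim disjE conjE) (auto intro: that[of e 1] that[of e "-1"])
  qed
  show ?case
  proof (intro exI[of _ "\<lambda>g. y g + (if g = e then c else 0)"] conjI allI impI)
    show "\<And>g. g \<notin> F \<Longrightarrow> y g + (if g = e then c else 0) = 0" using y(1) e by auto
    show "excess F tail head (\<lambda>g. y g + (if g = e then c else 0)) v = of_bool (v = t) - of_bool (v = s)" for v
      using y(2) c[of v] by (simp add: excess_add excess_single_edge[OF assms(1) e])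
  qed
qed

lemma path_flow_values:
  assumes "finite V" "finite F" "\<forall>g\<in>F. tail g \<in> V \<and> head g \<in> V" "forest F tail head"
    and "\<forall>v. excess F tail head y v = of_bool (v = t) - (of_bool (v = s) :: int)" "e \<in> F"
  shows "y e \<in> {-1, 0, 1}"
proof -
  define S where "S = {w\<in>V. und_connected (F - {e}) tail head (tail e) w}"
  have "y e = - (\<Sum>v\<in>S. excess F tail head y v)"
    using bridge_value_eq_cut_excess[OF assms(1-3,6)] assms(4,6) unfolding forest_def S_def by blast
  also have "\<dots> = - (\<Sum>v\<in>S. of_bool (v = t) - of_bool (v = s))"
    using assms(5) by simp
  also have "\<dots> = of_bool (s \<in> S) - of_bool (t \<in> S)"
    using assms(1) by (simp add: S_def sum_subtractf)
  finally show ?thesis by simp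
qed

lemma circulations_eq_if_eq_off_forest:
  fixes y z :: "'e \<Rightarrow> 'a::ab_group_add"
  assumes "wf_digraph V E tail head" "T \<subseteq> E" "forest T tail head"
    and "conserves V E tail head y" "conserves V E tail head z" "\<forall>e. e \<notin> T \<longrightarrow> y e = z e"
  shows "y = z"
proof -
  have "\<forall>e\<in>E. y e - z e \<in> {0}"
    using assms(6) by (intro forest_circulation_in_subgroup[OF assms(1-3) conserves_diff[OF assms(4,5)]]) auto
  then show ?thesis using assms(2,6) by (auto intro!: ext)
qed

lemma fundamental_circulation_exists:
  fixes V :: "'v set" and E T :: "'e set" and tail head :: "'e \<Rightarrow> 'v" and f :: 'e
  assumes "wf_digraph V E tail head" "spanning_tree V E tail head T" "f \<in> E" "f \<notin> T"
  shows "\<exists>\<gamma> :: 'e \<Rightarrow> int. \<gamma> f = 1 \<and> (\<forall>e. \<gamma> e \<in> {-1, 0, 1}) \<and> (\<forall>e. \<gamma> e \<noteq> 0 \<longrightarrow> e \<in> insert f T) \<and>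
    conserves V E tail head \<gamma>"
proof -
  have fin: "finite V" "finite E" "finite T" and TE: "T \<subseteq> E"
    and ends: "\<forall>g\<in>E. tail g \<in> V \<and> head g \<in> V"
    using assms(1,2) finite_subset by (auto simp: wf_digraph_def spanning_tree_def)
  have "und_connected T tail head (head f) (tail f)"
    using assms(2,3) ends by (simp add: spanning_tree_def)
  from path_flow_exists[OF fin(3) this] obtain y :: "'e \<Rightarrow> int"
    where y_supp: "\<forall>e. e \<notin> T \<longrightarrow> y e = 0"
      and y_exc: "\<forall>v. excess T tail head y v = of_bool (v = tail f) - of_bool (v = head f)"
    by blast
  define \<gamma> where "\<gamma> = y(f := 1)"
  have "\<gamma> e \<in> {-1, 0, 1}" for e
    using path_flow_values[OF fin(1,3) _ spanning_tree_imp_forest[OF assms(2)] y_exc, of e]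
      y_supp ends TE by (auto simp: \<gamma>_def)
  moreover have "conserves V E tail head \<gamma>"
    unfolding conserves_iff_excess
  proof
    fix v assume "v \<in> V"
    have "excess E tail head \<gamma> v = excess (insert f T) tail head \<gamma> v"
      using y_supp assms(3) TE by (intro excess_restrict[OF fin(2)]) (auto simp: \<gamma>_def)
    also have "\<dots> = excess T tail head \<gamma> v + (if head f = v then 1 else 0) - (if tail f = v then 1 else 0)"
      using fin(3) assms(4) by (simp add: excess_insert \<gamma>_def)
    also have "excess T tail head \<gamma> v = excess T tail head y v"
      using assms(4) by (intro excess_cong) (auto simp: \<gamma>_def)
    finally show "excess E tail head \<gamma> v = 0" using y_exc by auto
  qed
  ultimately show ?thesis using y_supp by (intro exI[of _ \<gamma>]) (auto simp: \<gamma>_def)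
qed

lemma fund_cycle_props:
  fixes V :: "'v set" and E T :: "'e set" and tail head :: "'e \<Rightarrow> 'v" and f :: 'e
  assumes "wf_digraph V E tail head" "spanning_tree V E tail head T" "f \<in> E" "f \<notin> T"
  shows "fund_cycle V E tail head T f f = 1"
    and "\<forall>e. fund_cycle V E tail head T f e \<noteq> 0 \<longrightarrow> e \<in> insert f T"
    and "conserves V E tail head (fund_cycle V E tail head T f)"
proof -
  define P where "P \<gamma> \<longleftrightarrow> \<gamma> f = 1 \<and> (\<forall>e. \<gamma> e \<in> {-1, 0, 1}) \<and> (\<forall>e. \<gamma> e \<noteq> 0 \<longrightarrow> e \<in> insert f T) \<and>
      conserves V E tail head \<gamma>" for \<gamma> :: "'e \<Rightarrow> int"
  have unique: "\<gamma>1 = \<gamma>2" if "P \<gamma>1" "P \<gamma>2" for \<gamma>1 \<gamma>2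
  proof (rule circulations_eq_if_eq_off_forest[OF assms(1) _ spanning_tree_imp_forest[OF assms(2)]])
    show "T \<subseteq> E" using assms(2) by (simp add: spanning_tree_def)
    show "\<forall>e. e \<notin> T \<longrightarrow> \<gamma>1 e = \<gamma>2 e"
    proof (intro allI impI)
      fix e assume "e \<notin> T"
      then show "\<gamma>1 e = \<gamma>2 e"
        using that unfolding P_def by (cases "e = f") (simp_all, metis insertE)
    qed
  qed (use that in \<open>simp_all add: P_def\<close>)
  obtain \<gamma> where "P \<gamma>"
    using fundamental_circulation_exists[OF assms] unfolding P_def by blast
  then have "P (fund_cycle V E tail head T f)"
    unfolding fund_cycle_def P_def[symmetric] by (rule theI[of P \<gamma>]) (rule unique[OF _ \<open>P \<gamma>\<close>])
  then show "fund_cycle V E tail head T f f = 1"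
    and "\<forall>e. fund_cycle V E tail head T f e \<noteq> 0 \<longrightarrow> e \<in> insert f T"
    and "conserves V E tail head (fund_cycle V E tail head T f)"
    by (simp_all add: P_def)
qed

theorem corollary1:
  fixes V :: "'v set" and E :: "'e set" and tail head :: "'e \<Rightarrow> 'v"
    and u :: "'e \<Rightarrow> nat" and c :: "'e \<Rightarrow> int" and b :: "'e \<Rightarrow> nat" and B :: nat
    and L T U :: "'e set" and eb :: 'e and x :: "'e \<Rightarrow> real"
  assumes "wf_digraph V E tail head"
    and "basis_structure V E tail head b L T U eb"
    and "basic_solution V E tail head u b B L T U x"
    and "\<forall>e\<in>E. 0 \<le> x e \<and> x e \<le> real (u e)"
  shows "\<exists>xI xC :: 'e \<Rightarrow> real.
           (\<forall>e\<in>E. x e = xI e + xC e) \<and>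
           (\<forall>e\<in>E. xI e \<in> \<int>) \<and>
           (\<forall>e\<in>E. e \<notin> cycle_edges V E tail head T eb \<longrightarrow> xC e = 0)"
proof -
  have basis: "eb \<in> E" "L \<union> T \<union> U = E - {eb}" "spanning_tree V E tail head T"
    using assms(2) by (simp_all add: basis_structure_def)
  then have "eb \<notin> T" "T \<subseteq> E" by (auto simp: spanning_tree_def)
  define \<gamma> where "\<gamma> = fund_cycle V E tail head T eb"
  note cycle = fund_cycle_props[OF assms(1) basis(3,1) \<open>eb \<notin> T\<close>, folded \<gamma>_def]
  define xI where "xI e = x e - x eb * of_int (\<gamma> e)" for e
  have "conserves V E tail head xI"
    using assms(3) cycle(3) unfolding xI_def basic_solution_def
    by (intro conserves_diff conserves_mult_left conserves_of_int) simp_all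
  moreover have "xI e \<in> \<int>" if "e \<in> E - T" for e
  proof (cases "e = eb")
    case False
    then have "\<gamma> e = 0" "e \<in> L \<or> e \<in> U" using that basis(2) cycle(2) by auto
    then show ?thesis using assms(3) by (auto simp: xI_def basic_solution_def)
  qed (simp add: xI_def cycle(1))
  ultimately have "\<forall>e\<in>E. xI e \<in> \<int>"
    using spanning_tree_imp_forest[OF basis(3)]
    by (intro forest_circulation_in_subgroup[OF assms(1) \<open>T \<subseteq> E\<close>]) (auto intro: Ints_diff)
  then show ?thesis
    by (intro exI[of _ xI] exI[of _ "\<lambda>e. x eb * of_int (\<gamma> e)"])
      (auto simp: xI_def cycle_edges_def \<gamma>_def)
qed

end
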